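(* Let $n\ge 0$ and $0\le k\le n$ be integers of the same parity (both even or both odd). Then $$\max_{x\in[-1,1]}|T_{n;\ge k}(x)|=|T_{n;\ge k}(0)|=|t_{n,k}|,$$ and consequently this maximum is at most $(n+k)^k/k!$.
   Context: For an integer $n\ge 0$, $T_n$ denotes the Chebyshev polynomial of the first kind, i.e. the polynomial with $T_n(\cos\theta)=\cos(n\theta)$ for all real $\theta$; write $T_n(x)=\sum_{j=0}^n t_{n,j}x^j$. For $0\le k\le n$ define the constituent polynomial $T_{n;\ge k}(x):=\sum_{j=k}^{n}t_{n,j}x^{j-k}$, so that $T_n(x)=\sum_{j=0}^{k-1}t_{n,j}x^j+x^kT_{n;\ge k}(x)$. *)

theory Defs
  imports "HOL-Computational_Algebra.Polynomial" Complex_Main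
begin

definition cheb_T :: "nat \<Rightarrow> real poly" where
  "cheb_T n = (THE p. \<forall>\<theta>::real. poly p (cos \<theta>) = cos (real n * \<theta>))"

definition cheb_T_ge :: "nat \<Rightarrow> nat \<Rightarrow> real poly" where
  "cheb_T_ge n k = (\<Sum>j=k..n. monom (coeff (cheb_T n) j) (j - k))"

end

theory Submission
  imports Defs
begin

text \<open>The constituent polynomials satisfy the Chebyshev recurrence shifted in both indices,
  T_{n+2;>=k+1} = 2 T_{n+1;>=k} - T_{n;>=k+1}. With the sign s_{n,k} = (-1)^((n-k)/2), the two
  terms on the right carry the signs s_{n+2,k+1} and -s_{n+2,k+1}, so the triangle inequality
  propagates the bound |T_{n;>=k}(x)| <= s_{n,k} T_{n;>=k}(0) on [-1,1] by induction on n. The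
  base case k = 0 is |T_n| <= 1 = s_{n,0} T_n(0). The bound on t_{n,k} follows from the same
  recurrence for the coefficients together with u^(k+1) + 2(k+1) u^k <= (u+2)^(k+1).\<close>

lemma cos_Suc_Suc_mult:
  "cos (real (Suc (Suc n)) * t) = 2 * cos t * cos (real (Suc n) * t) - cos (real n * t)"
proof -
  have "real (Suc (Suc n)) * t = real (Suc n) * t + t" "real n * t = real (Suc n) * t - t"
    by (simp_all add: algebra_simps)
  then show ?thesis
    by (simp only: cos_add cos_diff) (simp add: algebra_simps)
qed

lemma cheb_T_exists: "\<exists>p. \<forall>t. poly p (cos t) = cos (real n * t)"
proof (induction n rule: induct_nat_012)
  case 0
  then show ?case by (intro exI[of _ 1]) simp
next
  case 1
  then show ?case by (intro exI[of _ "[:0, 1:]"]) simp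
next
  case (ge2 n)
  then obtain p q where "\<forall>t. poly p (cos t) = cos (real n * t)"
    and "\<forall>t. poly q (cos t) = cos (real (Suc n) * t)" by blast
  then show ?case
    by (intro exI[of _ "[:0, 2:] * q - p"]) (simp add: cos_Suc_Suc_mult del: of_nat_Suc)
qed

lemma cheb_T_unique:
  assumes "\<forall>t. poly p (cos t) = cos (real n * t)" "\<forall>t. poly q (cos t) = cos (real n * t)"
  shows "p = q"
proof -
  have "poly (p - q) x = 0" if "x \<in> {-1..1}" for x
  proof -
    have "cos (arccos x) = x"
      using that by (simp add: cos_arccos)
    then show ?thesis
      using assms by (metis diff_self poly_diff)
  qed
  then have "{-1..1::real} \<subseteq> {x. poly (p - q) x = 0}"
    by blast
  moreover have "infinite {-1..1::real}"
    by simp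
  ultimately have "infinite {x. poly (p - q) x = 0}"
    using finite_subset by blast
  then have "p - q = 0"
    using poly_roots_finite by blast
  then show ?thesis
    by simp
qed

lemma poly_cheb_T_cos: "poly (cheb_T n) (cos t) = cos (real n * t)"
proof -
  have "\<exists>!p. \<forall>t. poly p (cos t) = cos (real n * t)"
    using cheb_T_exists cheb_T_unique by blast
  from theI'[OF this] show ?thesis
    unfolding cheb_T_def by blast
qed

lemma cheb_T_eqI: "(\<And>t. poly p (cos t) = cos (real n * t)) \<Longrightarrow> cheb_T n = p"
  by (intro cheb_T_unique allI) (simp_all add: poly_cheb_T_cos)

lemma cheb_T_0 [simp]: "cheb_T 0 = 1"
  by (rule cheb_T_eqI) simp

lemma cheb_T_Suc_0 [simp]: "cheb_T (Suc 0) = [:0, 1:]"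
  by (rule cheb_T_eqI) simp

lemma cheb_T_Suc_Suc: "cheb_T (Suc (Suc n)) = [:0, 2:] * cheb_T (Suc n) - cheb_T n"
  by (rule cheb_T_eqI) (subst cos_Suc_Suc_mult, simp add: poly_cheb_T_cos)

lemma poly_cheb_T_eq_cos_arccos: "x \<in> {-1..1} \<Longrightarrow> poly (cheb_T n) x = cos (real n * arccos x)"
  using poly_cheb_T_cos[of n "arccos x"] by (simp add: cos_arccos)

lemma abs_poly_cheb_T_le_1: "x \<in> {-1..1} \<Longrightarrow> \<bar>poly (cheb_T n) x\<bar> \<le> 1"
  by (simp add: poly_cheb_T_eq_cos_arccos)

lemma poly_cheb_T_0_even: "even n \<Longrightarrow> poly (cheb_T n) 0 = (-1) ^ (n div 2)"
  using poly_cheb_T_cos[of n "pi / 2"] by (auto elim!: evenE)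

lemma degree_cheb_T_le: "degree (cheb_T n) \<le> n"
proof (induction n rule: induct_nat_012)
  case (ge2 n)
  have "degree ([:0, 2:] * cheb_T (Suc n)) \<le> Suc (Suc n)"
    using ge2 degree_mult_le[of "[:0, 2:]" "cheb_T (Suc n)"] by simp
  moreover have "degree (cheb_T n) \<le> Suc (Suc n)"
    using ge2 by simp
  ultimately show ?case
    unfolding cheb_T_Suc_Suc by (rule degree_diff_le)
qed simp_all

lemma coeff_cheb_T_eq_0: "n < j \<Longrightarrow> coeff (cheb_T n) j = 0"
  using degree_cheb_T_le by (meson coeff_eq_0 le_less_trans)

lemma coeff_cheb_T_Suc_Suc:
  "coeff (cheb_T (Suc (Suc n))) (Suc j) = 2 * coeff (cheb_T (Suc n)) j - coeff (cheb_T n) (Suc j)"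
  by (simp add: cheb_T_Suc_Suc)

lemma coeff_cheb_T_ge: "coeff (cheb_T_ge n k) i = coeff (cheb_T n) (i + k)"
proof -
  have "coeff (cheb_T_ge n k) i = (\<Sum>j\<in>{k..n}. if j = i + k then coeff (cheb_T n) j else 0)"
    unfolding cheb_T_ge_def coeff_sum coeff_monom by (rule sum.cong) auto
  also have "\<dots> = coeff (cheb_T n) (i + k)"
    using coeff_cheb_T_eq_0[of n "i + k"] by (subst sum.delta) auto
  finally show ?thesis .
qed

lemma cheb_T_ge_0_right [simp]: "cheb_T_ge n 0 = cheb_T n"
  by (rule poly_eqI) (simp add: coeff_cheb_T_ge)

lemma cheb_T_ge_eq_0: "n < k \<Longrightarrow> cheb_T_ge n k = 0"
  by (rule poly_eqI) (simp add: coeff_cheb_T_ge coeff_cheb_T_eq_0)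

lemma poly_cheb_T_ge_0: "poly (cheb_T_ge n k) 0 = coeff (cheb_T n) k"
  by (simp add: poly_0_coeff_0 coeff_cheb_T_ge)

lemma cheb_T_ge_Suc_Suc:
  "cheb_T_ge (Suc (Suc n)) (Suc k) = smult 2 (cheb_T_ge (Suc n) k) - cheb_T_ge n (Suc k)"
  by (rule poly_eqI) (simp add: coeff_cheb_T_ge coeff_cheb_T_Suc_Suc)

lemma abs_poly_cheb_T_le_sign:
  assumes "even n" "x \<in> {-1..1}"
  shows "\<bar>poly (cheb_T n) x\<bar> \<le> (-1) ^ (n div 2) * poly (cheb_T n) 0"
  using assms by (simp add: abs_poly_cheb_T_le_1 poly_cheb_T_0_even)

lemma abs_poly_cheb_T_ge_le_sign:
  assumes "even (n - k)" "x \<in> {-1..1}"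
  shows "\<bar>poly (cheb_T_ge n k) x\<bar> \<le> (-1) ^ ((n - k) div 2) * poly (cheb_T_ge n k) 0"
  using assms(1)
proof (induction n arbitrary: k rule: induct_nat_012)
  case 0
  then show ?case
    using assms(2) by (cases k) (simp_all add: cheb_T_ge_eq_0)
next
  case 1
  then have "k \<noteq> 0"
    by (cases k) auto
  then consider "k = 1" | "1 < k"
    by linarith
  then show ?case
  proof cases
    case 1
    have "cheb_T_ge 1 1 = 1"
      by (simp add: cheb_T_ge_def)
    then show ?thesis
      using 1 by simp
  qed (simp add: cheb_T_ge_eq_0)
next
  case (ge2 n)
  show ?case
  proof (cases k)
    case 0
    then show ?thesis
      using abs_poly_cheb_T_le_sign[of "Suc (Suc n)" x] ge2.prems assms(2) by simp
  next
    case (Suc k')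
    define s :: real where "s = (-1) ^ ((Suc (Suc n) - k) div 2)"
    have q: "\<bar>poly (cheb_T_ge (Suc n) k') x\<bar> \<le> s * poly (cheb_T_ge (Suc n) k') 0"
      using ge2.IH(2)[of k'] ge2.prems Suc by (simp add: s_def)
    have r: "\<bar>poly (cheb_T_ge n k) x\<bar> \<le> - s * poly (cheb_T_ge n k) 0"
    proof (cases "n < k")
      case False
      then have "Suc (Suc n) - k = Suc (Suc (n - k))"
        by simp
      then show ?thesis
        using ge2.IH(1)[of k] ge2.prems by (simp add: s_def)
    qed (simp add: cheb_T_ge_eq_0)
    have "\<bar>poly (cheb_T_ge (Suc (Suc n)) k) x\<bar>
        \<le> 2 * \<bar>poly (cheb_T_ge (Suc n) k') x\<bar> + \<bar>poly (cheb_T_ge n k) x\<bar>"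
      unfolding Suc cheb_T_ge_Suc_Suc by simp
    also have "\<dots> \<le> s * poly (cheb_T_ge (Suc (Suc n)) k) 0"
      using q r unfolding Suc cheb_T_ge_Suc_Suc by (simp add: algebra_simps)
    finally show ?thesis
      by (simp add: s_def)
  qed
qed

lemma abs_poly_cheb_T_ge_le_abs_poly_0:
  assumes "even (n - k)" "x \<in> {-1..1}"
  shows "\<bar>poly (cheb_T_ge n k) x\<bar> \<le> \<bar>poly (cheb_T_ge n k) 0\<bar>"
proof -
  have "(-1) ^ ((n - k) div 2) * poly (cheb_T_ge n k) 0 \<le> \<bar>poly (cheb_T_ge n k) 0\<bar>"
    by (cases "even ((n - k) div 2)") auto
  then show ?thesis
    using abs_poly_cheb_T_ge_le_sign[OF assms] by linarith
qed

lemma power_Suc_add_ge: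
  fixes u a :: real
  assumes "u \<ge> 0" "a \<ge> 0"
  shows "u ^ Suc m + real (Suc m) * a * u ^ m \<le> (u + a) ^ Suc m"
proof (induction m)
  case (Suc m)
  have "u ^ Suc (Suc m) + real (Suc (Suc m)) * a * u ^ Suc m
      \<le> (u + a) * (u ^ Suc m + real (Suc m) * a * u ^ m)"
    using assms by (simp add: algebra_simps)
  also have "\<dots> \<le> (u + a) ^ Suc (Suc m)"
    using Suc assms by (simp add: mult_left_mono)
  finally show ?case .
qed simp

lemma abs_coeff_cheb_T_le: "\<bar>coeff (cheb_T n) k\<bar> \<le> real (n + k) ^ k / fact k"
proof (induction n arbitrary: k rule: induct_nat_012)
  case 0
  then show ?case
    by (cases k) simp_all
next
  case 1
  then show ?case
    by (cases k) (simp_all add: coeff_pCons split: nat.split)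
next
  case (ge2 n)
  show ?case
  proof (cases k)
    case 0
    then show ?thesis
      using abs_poly_cheb_T_le_1[of 0] by (simp add: poly_0_coeff_0)
  next
    case (Suc k')
    define u where "u = real (Suc n + k')"
    have "\<bar>coeff (cheb_T (Suc (Suc n))) k\<bar>
        \<le> 2 * \<bar>coeff (cheb_T (Suc n)) k'\<bar> + \<bar>coeff (cheb_T n) k\<bar>"
      unfolding Suc coeff_cheb_T_Suc_Suc by simp
    also have "\<dots> \<le> 2 * (u ^ k' / fact k') + u ^ k / fact k"
      using ge2.IH(2)[of k'] ge2.IH(1)[of k] Suc by (simp add: u_def)
    also have "\<dots> = (u ^ Suc k' + real (Suc k') * 2 * u ^ k') / fact (Suc k')"
      unfolding Suc by (simp add: field_simps del: of_nat_Suc)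
    also have "\<dots> \<le> (u + 2) ^ Suc k' / fact (Suc k')"
      using power_Suc_add_ge[of u 2 k'] by (simp add: u_def divide_right_mono)
    also have "\<dots> = real (Suc (Suc n) + k) ^ k / fact k"
      unfolding Suc u_def by simp
    finally show ?thesis .
  qed
qed

theorem mainTheorem4:
  fixes n k :: nat
  assumes "k \<le> n" and "even n \<longleftrightarrow> even k"
  shows "(\<forall>x\<in>{-1..1::real}. \<bar>poly (cheb_T_ge n k) x\<bar> \<le> \<bar>poly (cheb_T_ge n k) 0\<bar>)
    \<and> (SUP x\<in>{-1..1::real}. \<bar>poly (cheb_T_ge n k) x\<bar>) = \<bar>poly (cheb_T_ge n k) 0\<bar>
    \<and> \<bar>poly (cheb_T_ge n k) 0\<bar> = \<bar>coeff (cheb_T n) k\<bar>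
    \<and> (SUP x\<in>{-1..1::real}. \<bar>poly (cheb_T_ge n k) x\<bar>) \<le> real (n + k) ^ k / fact k"
proof -
  have "even (n - k)"
    using assms by auto
  then have max_at_0: "\<forall>x\<in>{-1..1::real}. \<bar>poly (cheb_T_ge n k) x\<bar> \<le> \<bar>poly (cheb_T_ge n k) 0\<bar>"
    by (simp add: abs_poly_cheb_T_ge_le_abs_poly_0)
  have sup_eq: "(SUP x\<in>{-1..1::real}. \<bar>poly (cheb_T_ge n k) x\<bar>) = \<bar>poly (cheb_T_ge n k) 0\<bar>"
    by (rule cSup_eq_maximum) (use max_at_0 in auto)
  show ?thesis
    using max_at_0 sup_eq abs_coeff_cheb_T_le[of n k] by (simp add: poly_cheb_T_ge_0)
qed

end
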